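(* Let $d$ and $K$ be positive integers, and for $k=1,\ldots,K$ let $\{a_{k,n}\}_{n=1}^\infty$ and $\{b_{k,n}\}_{n=1}^\infty$ be sequences of non-zero integers such that the partial sums $\alpha_{k,N}=\sum_{n=1}^N\frac{b_{k,n}}{a_{k,n}}$ converge as $N\to\infty$; write $\alpha_k=\lim_{N\to\infty}\alpha_{k,N}$. Let $\varepsilon,\kappa$ be positive reals with $\kappa<1$, and suppose there is a sequence $\{a_n\}_{n=1}^\infty$ of integers such that for all $k=1,\ldots,K$ and $n\in\mathbb N$, \[ n^{1+\varepsilon}\le a_n\le a_{n+1},\quad a_n2^{-(\log_2 a_n)^\kappa}\le|a_{k,n}|\le\max\big\{a_n2^{(\log_2 a_n)^\kappa},2^{n^{-3}(Kd+1)^n}\big\},\quad |b_{k,n}|\le 2^{(\log_2 a_n)^\kappa},\] and $\limsup_{n\to\infty}a_n^{1/(Kd+1)^n}=\infty$. Let $P\in\mathbb Z[x_1,\ldots,x_K]$ be a polynomial of degree at most $d$. If $P(\alpha_{1,N},\ldots,\alpha_{K,N})\ne0$ for all sufficiently large $N$, then $P(\alpha_1,\ldots,\alpha_K)\ne0$. *)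

theory Defs
  imports "HOL-Analysis.Analysis"
begin

text \<open>Polynomials in \<open>\<int>[x_1,...,x_K]\<close> of total degree at most d are represented by their
  integer coefficient function on exponent vectors \<open>e\<close> (supported on \<open>{1..K}\<close>) of total
  degree at most d.\<close>

definition degvecs :: "nat \<Rightarrow> nat \<Rightarrow> (nat \<Rightarrow> nat) set" where
  "degvecs K d = {e. (\<forall>k. e k \<noteq> 0 \<longrightarrow> k \<in> {1..K}) \<and> (\<Sum>k=1..K. e k) \<le> d}"

definition mpoly_eval :: "nat \<Rightarrow> nat \<Rightarrow> ((nat \<Rightarrow> nat) \<Rightarrow> int) \<Rightarrow> (nat \<Rightarrow> real) \<Rightarrow> real" where
  "mpoly_eval K d c x = (\<Sum>e\<in>degvecs K d. real_of_int (c e) * (\<Prod>k=1..K. x k ^ e k))"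

definition partial_alpha :: "(nat \<Rightarrow> nat \<Rightarrow> int) \<Rightarrow> (nat \<Rightarrow> nat \<Rightarrow> int) \<Rightarrow> nat \<Rightarrow> nat \<Rightarrow> real" where
  "partial_alpha a b k N = (\<Sum>n=1..N. real_of_int (b k n) / real_of_int (a k n))"

end

(* Write u_n = log_2 a_n and m = Kd + 1, and suppose P(alpha) = 0 although P(alpha_N) is
   eventually nonzero.  Clearing denominators gives |P(alpha_N)| >= 2^(-(m-1) z_N), where
   z_N = sum_{n <= N} (u_n + u_n^kappa + n^-3 m^n) bounds the logarithmic size of the
   a_{k,n} with n <= N; as P is Lipschitz near alpha, some tail alpha_k - alpha_{k,N} is at
   least of that size.  Testing the tail against summable weights yields, for every large N,
   an index j > N at which u_j is at most (m-1) z_N up to lower-order terms.  Iterating this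
   recursive inequality keeps z_N / m^N bounded, so u_n = O(m^n) and a_n^(1/m^n) stays
   bounded, contradicting the limsup hypothesis. *)

theory Submission
  imports Defs
begin

lemma powr_le_mult_plus_const:
  fixes \<kappa> \<delta> :: real
  assumes "0 < \<kappa>" "\<kappa> < 1" "0 < \<delta>"
  obtains C where "0 \<le> C" and "\<And>x. 0 \<le> x \<Longrightarrow> x powr \<kappa> \<le> \<delta> * x + C"
proof
  define X where "X = \<delta> powr (-1 / (1 - \<kappa>))"
  have X_pos: "0 < X" using assms unfolding X_def by simp
  have "X powr (\<kappa> - 1) = \<delta> powr (-1 / (1 - \<kappa>) * (\<kappa> - 1))"
    unfolding X_def by (simp add: powr_powr)
  also have "-1 / (1 - \<kappa>) * (\<kappa> - 1) = 1" using assms by (simp add: field_simps)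
  finally have X_pow: "X powr (\<kappa> - 1) = \<delta>" using assms by simp
  show "0 \<le> X powr \<kappa>" by simp
  fix x :: real assume x: "0 \<le> x"
  show "x powr \<kappa> \<le> \<delta> * x + X powr \<kappa>"
  proof (cases "x \<le> X")
    case True
    then have "x powr \<kappa> \<le> X powr \<kappa>" using x assms by (intro powr_mono2) auto
    then show ?thesis using x assms by (smt (verit) mult_nonneg_nonneg)
  next
    case False
    then have "x powr (\<kappa> - 1) \<le> X powr (\<kappa> - 1)"
      using X_pos assms by (intro powr_mono2') auto
    then have "x * x powr (\<kappa> - 1) \<le> x * \<delta>" using X_pow x by (simp add: mult_left_mono)
    moreover have "x * x powr (\<kappa> - 1) = x powr \<kappa>"
      using False X_pos by (simp add: powr_diff divide_simps)
    ultimately show ?thesis by (smt (verit) powr_ge_zero mult.commute)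
  qed
qed

lemma sum_inverse_consecutive_products:
  assumes "1 \<le> N" "N \<le> j"
  shows "(\<Sum>n = Suc N..j. 1 / (real (n - 1) * real n)) = 1 / N - 1 / j"
  using assms(2)
proof (induction j rule: dec_induct)
  case base
  then show ?case by simp
next
  case (step j)
  have "0 < real j" using step assms(1) by simp
  then have "1 / (real j * real (Suc j)) = 1 / j - 1 / Suc j" by (simp add: field_simps)
  then show ?case using step by simp
qed

lemma powr_minus_three_le:
  assumes "2 \<le> n"
  shows "real n powr (-3) \<le> 1 / (real (n - 1) * real n)"
proof -
  have "real (n - 1) \<le> real n" by simp
  also have "\<dots> \<le> real n * real n" using assms by simp
  finally have "real (n - 1) \<le> real n * real n" .
  then have "real (n - 1) * real n \<le> real n ^ 3" by (simp add: power3_eq_cube mult_right_mono)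
  moreover have "0 < real (n - 1) * real n" using assms by simp
  ultimately show ?thesis
    using assms by (simp add: powr_minus divide_simps)
qed

lemma square_le_two_mult_power:
  fixes m :: real
  assumes "2 \<le> m"
  shows "real l * real l \<le> 2 * m ^ l"
proof -
  have "l * l \<le> 2 * 2 ^ l"
  proof (induction l)
    case (Suc l)
    show ?case
    proof (cases "l \<le> 2")
      case True
      then show ?thesis by (cases l; cases "l - 1"; auto)
    next
      case False
      then have "3 * l \<le> l * l" by simp
      moreover have "Suc l * Suc l = l * l + 2 * l + 1" by simp
      ultimately have "Suc l * Suc l \<le> 2 * (l * l)" using False by linarith
      then show ?thesis using Suc by simp
    qed
  qed simp
  then have "real l * real l \<le> 2 * 2 ^ l" by (metis of_nat_le_iff of_nat_mult of_nat_numeral of_nat_power)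
  also have "(2::real) ^ l \<le> m ^ l" using assms by (intro power_mono) auto
  finally show ?thesis by simp
qed

lemma polynomial_le_two_mult_power:
  fixes m c :: real
  assumes "2 \<le> m" "0 \<le> c"
  shows "real l \<le> 2 * m ^ l" and "real l * (c + real l) \<le> 2 * (c + 1) * m ^ l"
proof -
  have l: "real l \<le> real l * real l" by (simp add: mult_le_cancel_left1)
  then show "real l \<le> 2 * m ^ l" using square_le_two_mult_power[OF assms(1)] by (meson order.trans)
  have "real l * (c + real l) \<le> (c + 1) * (real l * real l)"
    using mult_right_mono[OF l assms(2)] by (simp add: algebra_simps)
  also have "\<dots> \<le> (c + 1) * (2 * m ^ l)"
    using square_le_two_mult_power[OF assms(1)] assms(2) by (intro mult_left_mono) auto
  also have "\<dots> = 2 * (c + 1) * m ^ l" by (simp only: mult_ac)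
  finally show "real l * (c + real l) \<le> 2 * (c + 1) * m ^ l" .
qed

lemma perturbed_recurrence_bounded:
  fixes s :: "nat \<Rightarrow> real"
  assumes "0 \<le> \<rho>" "\<rho> < 1" "0 \<le> E" and s_nonneg: "\<And>i. 0 \<le> s i"
    and s_step: "\<And>i. s (Suc i) \<le> s i + E * (1 + s i) * \<rho> ^ i"
  shows "s i \<le> (1 + s 0) * exp (E / (1 - \<rho>))"
proof -
  have partial: "1 + s i \<le> (1 + s 0) * exp (E * (\<Sum>k<i. \<rho> ^ k))" for i
  proof (induction i)
    case (Suc i)
    have "1 + s (Suc i) \<le> (1 + s i) * (1 + E * \<rho> ^ i)"
      using s_step[of i] by (simp add: algebra_simps)
    also have "\<dots> \<le> (1 + s i) * exp (E * \<rho> ^ i)"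
      using s_nonneg[of i] by (intro mult_left_mono exp_ge_add_one_self) auto
    also have "\<dots> \<le> (1 + s 0) * exp (E * (\<Sum>k<i. \<rho> ^ k)) * exp (E * \<rho> ^ i)"
      using Suc by (intro mult_right_mono) auto
    also have "\<dots> = (1 + s 0) * exp (E * (\<Sum>k<Suc i. \<rho> ^ k))"
      by (simp add: exp_add[symmetric] algebra_simps)
    finally show ?case .
  qed simp
  have "(\<Sum>k<i. \<rho> ^ k) = (1 - \<rho> ^ i) / (1 - \<rho>)" using assms by (simp add: sum_gp_strict)
  also have "\<dots> \<le> 1 / (1 - \<rho>)" using assms by (intro divide_right_mono) auto
  finally have "E * (\<Sum>k<i. \<rho> ^ k) \<le> E / (1 - \<rho>)"
    using assms by (metis mult_left_mono times_divide_eq_right mult_1_right)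
  then have "(1 + s 0) * exp (E * (\<Sum>k<i. \<rho> ^ k)) \<le> (1 + s 0) * exp (E / (1 - \<rho>))"
    using s_nonneg[of 0] by (intro mult_left_mono) auto
  then show ?thesis using partial[of i] by linarith
qed

lemma strict_mono_interval_cover:
  fixes f :: "nat \<Rightarrow> nat"
  assumes "strict_mono f" "f 0 < n"
  obtains i where "f i < n" "n \<le> f (Suc i)"
proof -
  define i\<^sub>0 where "i\<^sub>0 = (LEAST i. n \<le> f i)"
  have le: "n \<le> f i\<^sub>0"
    unfolding i\<^sub>0_def using strict_mono_imp_increasing[OF assms(1)] by (rule LeastI)
  have "i\<^sub>0 \<noteq> 0"
  proof
    assume "i\<^sub>0 = 0"
    then show False using le assms(2) by simp
  qed
  then obtain i where i: "i\<^sub>0 = Suc i" using not0_implies_Suc by blast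
  have "\<not> n \<le> f i" using not_less_Least[of i "\<lambda>i. n \<le> f i"] i unfolding i\<^sub>0_def by simp
  then show thesis using that le i by (simp add: not_le)
qed

lemma witness_chain:
  fixes W :: "nat \<Rightarrow> nat \<Rightarrow> bool"
  assumes "\<And>N. N\<^sub>0 \<le> N \<Longrightarrow> \<exists>j>N. W N j"
  obtains s where "strict_mono s" "N\<^sub>0 \<le> s 0" "\<And>i. W (s i) (s (Suc i))"
proof -
  have "\<exists>j. N\<^sub>0 \<le> j \<and> N < j \<and> W N j" if "N\<^sub>0 \<le> N" for N
    using assms[OF that] that by (auto intro: order.trans less_imp_le)
  then have "\<exists>s. \<forall>i. N\<^sub>0 \<le> s i \<and> s i < s (Suc i) \<and> W (s i) (s (Suc i))"
    by (intro dependent_nat_choice[of "\<lambda>_ N. N\<^sub>0 \<le> N" "\<lambda>_ N j. N < j \<and> W N j"]) auto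
  then obtain s where s: "\<And>i. N\<^sub>0 \<le> s i \<and> s i < s (Suc i) \<and> W (s i) (s (Suc i))" by blast
  then have "strict_mono s" by (simp add: strict_mono_Suc_iff)
  with s show thesis by (intro that) auto
qed

lemma bounded_along_chain:
  fixes R :: "nat \<Rightarrow> real" and s :: "nat \<Rightarrow> nat"
  assumes "strict_mono s" "0 \<le> \<rho>" "\<rho> < 1" "0 \<le> E" and R_nonneg: "\<And>N. 0 \<le> R N"
    and step: "\<And>i. R (s (Suc i)) + 1 / s (Suc i) \<le> R (s i) + 1 / s i + E * (1 + R (s i)) * \<rho> ^ s i"
  obtains Q where "0 \<le> Q" "\<And>i. R (s i) \<le> Q"
proof -
  define q where "q i = R (s i) + 1 / s i" for i
  have q_step: "q (Suc i) \<le> q i + E * (1 + q i) * \<rho> ^ i" for i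
  proof -
    have "\<rho> ^ s i \<le> \<rho> ^ i"
      using assms(2,3) strict_mono_imp_increasing[OF assms(1)] by (intro power_decreasing) auto
    then have "E * (1 + R (s i)) * \<rho> ^ s i \<le> E * (1 + q i) * \<rho> ^ i"
      unfolding q_def using assms(2,4) R_nonneg by (intro mult_mono) auto
    then show ?thesis using step[of i] unfolding q_def by simp
  qed
  show thesis
  proof (rule that)
    show "0 \<le> (1 + q 0) * exp (E / (1 - \<rho>))" using R_nonneg[of "s 0"] by (simp add: q_def)
    fix i
    have "q i \<le> (1 + q 0) * exp (E / (1 - \<rho>))"
      using assms(2-4) R_nonneg q_step by (intro perturbed_recurrence_bounded) (auto simp: q_def)
    moreover have "0 \<le> 1 / real (s i)" by simp
    ultimately show "R (s i) \<le> (1 + q 0) * exp (E / (1 - \<rho>))" unfolding q_def by linarith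
  qed
qed

lemma exponential_bound_from_chain:
  fixes u :: "nat \<Rightarrow> real" and s :: "nat \<Rightarrow> nat" and m C :: real
  assumes "strict_mono s" "1 \<le> s 0" "1 \<le> m" "0 \<le> C"
    and u_nonneg: "\<And>n. 1 \<le> n \<Longrightarrow> 0 \<le> u n"
    and u_mono: "\<And>n j. 1 \<le> n \<Longrightarrow> n \<le> j \<Longrightarrow> u n \<le> u j"
    and chain: "\<And>i. u (s (Suc i)) \<le> C * m ^ s i"
  obtains B where "\<And>n. 1 \<le> n \<Longrightarrow> u n \<le> B * m ^ n"
proof
  define M where "M = Max (u ` {1..s 0})"
  fix n :: nat assume n: "1 \<le> n"
  have m_pow: "1 \<le> m ^ n" using assms(3) by (simp add: one_le_power)
  show "u n \<le> max M C * m ^ n"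
  proof (cases "n \<le> s 0")
    case True
    then have "u n \<le> M" unfolding M_def using n by (intro Max_ge) auto
    also have "\<dots> \<le> M * m ^ n"
      using m_pow u_nonneg[of n] n \<open>u n \<le> M\<close> by (simp add: mult_le_cancel_left1)
    also have "\<dots> \<le> max M C * m ^ n" using assms(3) by (intro mult_right_mono) auto
    finally show ?thesis .
  next
    case False
    then obtain i where i: "s i < n" "n \<le> s (Suc i)"
      using strict_mono_interval_cover[OF assms(1)] by (metis not_le)
    have "u n \<le> u (s (Suc i))" using u_mono[OF n i(2)] .
    also have "\<dots> \<le> C * m ^ s i" by (rule chain)
    also have "\<dots> \<le> max M C * m ^ n"
      using i assms(3,4) by (intro mult_mono power_increasing) auto
    finally show ?thesis .
  qed
qed

lemma powr_le_mult_power: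
  fixes x A m \<kappa> :: real
  assumes "0 \<le> x" "1 \<le> A" "0 < m" "0 < \<kappa>" "\<kappa> \<le> 1" "x \<le> A * m ^ N"
  shows "x powr \<kappa> \<le> A * (m powr \<kappa>) ^ N"
proof -
  have "(m ^ N) powr \<kappa> = (m powr \<kappa>) ^ N"
    using assms(3) by (subst powr_realpow[symmetric]) (auto simp: powr_powr powr_power mult.commute)
  then have "(A * m ^ N) powr \<kappa> = A powr \<kappa> * (m powr \<kappa>) ^ N"
    using assms(2,3) by (simp add: powr_mult)
  moreover have "x powr \<kappa> \<le> (A * m ^ N) powr \<kappa>" using assms by (intro powr_mono2) auto
  moreover have "A powr \<kappa> * (m powr \<kappa>) ^ N \<le> A * (m powr \<kappa>) ^ N"
    using powr_mono[of \<kappa> 1 A] assms by (intro mult_right_mono) auto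
  ultimately show ?thesis by linarith
qed

section \<open>The growth recursion\<close>

definition growth_sum :: "real \<Rightarrow> real \<Rightarrow> (nat \<Rightarrow> real) \<Rightarrow> nat \<Rightarrow> real" where
  "growth_sum m \<kappa> u N = (\<Sum>n = 1..N. u n + u n powr \<kappa> + real n powr (-3) * m ^ n)"

context
  fixes m \<kappa> :: real and u :: "nat \<Rightarrow> real"
  assumes m_ge: "2 \<le> m" and \<kappa>_pos: "0 < \<kappa>" and \<kappa>_less: "\<kappa> < 1"
    and u_nonneg: "\<And>n. 1 \<le> n \<Longrightarrow> 0 \<le> u n"
    and u_mono: "\<And>n j. 1 \<le> n \<Longrightarrow> n \<le> j \<Longrightarrow> u n \<le> u j"
begin

lemma growth_sum_nonneg: "0 \<le> growth_sum m \<kappa> u N"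
  unfolding growth_sum_def using u_nonneg m_ge by (intro sum_nonneg) auto

lemma growth_sum_increment_bound:
  assumes "1 \<le> N" "N \<le> j" and G: "u j powr \<kappa> \<le> G"
  shows "growth_sum m \<kappa> u j
    \<le> growth_sum m \<kappa> u N + real (j - N) * (u j + G) + m ^ j * (1 / N - 1 / j)"
proof -
  have term_bound: "u n + u n powr \<kappa> + real n powr (-3) * m ^ n
      \<le> u j + G + m ^ j * (1 / (real (n - 1) * real n))" if n: "n \<in> {Suc N..j}" for n
  proof -
    have "u n \<le> u j" "0 \<le> u n" using n assms u_mono u_nonneg by auto
    then have "u n powr \<kappa> \<le> G" using G \<kappa>_pos by (meson order_trans powr_mono2 less_imp_le)
    moreover have "real n powr (-3) * m ^ n \<le> 1 / (real (n - 1) * real n) * m ^ j"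
      using n assms m_ge by (intro mult_mono powr_minus_three_le power_increasing) auto
    ultimately show ?thesis using \<open>u n \<le> u j\<close> by (simp add: mult.commute)
  qed
  have "growth_sum m \<kappa> u j = growth_sum m \<kappa> u N
      + (\<Sum>n = Suc N..j. u n + u n powr \<kappa> + real n powr (-3) * m ^ n)"
    unfolding growth_sum_def using sum.ub_add_nat[where m=1 and n=N and p="j - N"] assms(1,2) by simp
  also have "\<dots> \<le> growth_sum m \<kappa> u N
      + (\<Sum>n = Suc N..j. u j + G + m ^ j * (1 / (real (n - 1) * real n)))"
    using term_bound by (intro add_left_mono sum_mono) auto
  also have "(\<Sum>n = Suc N..j. u j + G + m ^ j * (1 / (real (n - 1) * real n)))
      = real (j - N) * (u j + G) + m ^ j * (\<Sum>n = Suc N..j. 1 / (real (n - 1) * real n))"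
    by (simp add: sum.distrib sum_distrib_left)
  finally show ?thesis unfolding sum_inverse_consecutive_products[OF assms(1,2)] by simp
qed

lemma growth_step_u_bound:
  assumes "0 < \<theta>" "0 \<le> c"
  obtains D where "1 \<le> D"
    and "\<And>N j. 1 \<le> j \<Longrightarrow> \<theta> * u j - 2 * u j powr \<kappa> \<le> (m - 1) * growth_sum m \<kappa> u N + c \<Longrightarrow>
           u j \<le> D * (1 + growth_sum m \<kappa> u N / m ^ N) * m ^ N"
proof -
  obtain C where C: "0 \<le> C" and lin: "\<And>x. 0 \<le> x \<Longrightarrow> x powr \<kappa> \<le> \<theta> / 4 * x + C"
    using powr_le_mult_plus_const[of \<kappa> "\<theta> / 4"] \<kappa>_pos \<kappa>_less assms(1) by auto
  define D where "D = 2 / \<theta> * (m - 1 + c + 2 * C) + 1"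
  show thesis
  proof (rule that)
    show "1 \<le> D" unfolding D_def using assms m_ge C by simp
    fix N j
    assume j: "1 \<le> j" and w: "\<theta> * u j - 2 * u j powr \<kappa> \<le> (m - 1) * growth_sum m \<kappa> u N + c"
    define r where "r = growth_sum m \<kappa> u N / m ^ N"
    have r: "0 \<le> r" "growth_sum m \<kappa> u N = r * m ^ N"
      unfolding r_def using growth_sum_nonneg m_ge by auto
    have X: "1 \<le> (1 + r) * m ^ N"
      using r m_ge by (intro mult_ge1_I) (auto simp: one_le_power)
    have "\<theta> / 4 * u j = \<theta> * u j / 4" "\<theta> / 2 * u j = \<theta> * u j / 2" by simp_all
    then have "\<theta> / 2 * u j \<le> (m - 1) * (r * m ^ N) + (c + 2 * C)"
      using w lin[OF u_nonneg[OF j]] unfolding r(2) by linarith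
    also have "\<dots> \<le> (m - 1) * ((1 + r) * m ^ N) + (c + 2 * C) * ((1 + r) * m ^ N)"
      using m_ge X assms(2) C by (intro add_mono mult_left_mono) (auto simp: mult_le_cancel_left1)
    finally have "u j \<le> 2 / \<theta> * (m - 1 + c + 2 * C) * ((1 + r) * m ^ N)"
      using assms(1) by (simp add: field_simps)
    also have "\<dots> \<le> (2 / \<theta> * (m - 1 + c + 2 * C) + 1) * ((1 + r) * m ^ N)"
      using X by (intro mult_right_mono) auto
    also have "\<dots> = D * (1 + r) * m ^ N" unfolding D_def by (simp only: mult.assoc)
    finally show "u j \<le> D * (1 + growth_sum m \<kappa> u N / m ^ N) * m ^ N" unfolding r_def .
  qed
qed

lemma growth_step_sum_bound:
  assumes "1 \<le> N" "N < j" and G: "u j powr \<kappa> \<le> G"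
    and w: "u j - 2 * u j powr \<kappa> \<le> (m - 1) * growth_sum m \<kappa> u N + c + real (j - N)"
  shows "growth_sum m \<kappa> u j \<le> growth_sum m \<kappa> u N * (1 + real (j - N) * (m - 1))
    + real (j - N) * (c + real (j - N)) + 3 * real (j - N) * G + m ^ j * (1 / N - 1 / j)"
proof -
  let ?l = "real (j - N)" and ?z = "growth_sum m \<kappa> u N"
  have "u j + G \<le> (m - 1) * ?z + c + ?l + 3 * G" using w G by linarith
  then have "?l * (u j + G) \<le> ?l * ((m - 1) * ?z + c + ?l + 3 * G)" by (intro mult_left_mono) auto
  also have "\<dots> = ?z * (?l * (m - 1)) + ?l * (c + ?l) + 3 * ?l * G" by (simp add: algebra_simps)
  finally have "?l * (u j + G) \<le> ?z * (?l * (m - 1)) + ?l * (c + ?l) + 3 * ?l * G" .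
  moreover have "?z * (1 + ?l * (m - 1)) = ?z + ?z * (?l * (m - 1))" by (simp add: algebra_simps)
  ultimately show ?thesis
    using growth_sum_increment_bound[OF assms(1) less_imp_le[OF assms(2)] G] by linarith
qed

lemma growth_step_ratio_bound:
  assumes "0 \<le> c" "1 \<le> D" "1 \<le> N" "N < j"
    and u_j: "u j \<le> D * (1 + growth_sum m \<kappa> u N / m ^ N) * m ^ N"
    and w: "u j - 2 * u j powr \<kappa> \<le> (m - 1) * growth_sum m \<kappa> u N + c + real (j - N)"
  shows "growth_sum m \<kappa> u j / m ^ j + 1 / j \<le> growth_sum m \<kappa> u N / m ^ N + 1 / N
     + (2 * (c + 1) + 6 * D) * (1 + growth_sum m \<kappa> u N / m ^ N) * (m powr \<kappa> / m) ^ N"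
proof -
  define r where "r = growth_sum m \<kappa> u N / m ^ N"
  define \<mu> where "\<mu> = m powr \<kappa>"
  define l where "l = j - N"
  define G where "G = D * (1 + r) * \<mu> ^ N"
  have r: "0 \<le> r" "growth_sum m \<kappa> u N = r * m ^ N"
    unfolding r_def using growth_sum_nonneg m_ge by auto
  have mj: "m ^ j = m ^ N * m ^ l" unfolding l_def using assms(4) by (simp flip: power_add)
  have \<mu>N: "1 \<le> \<mu> ^ N" unfolding \<mu>_def using m_ge \<kappa>_pos by (simp add: ge_one_powr_ge_zero one_le_power)
  have one_le: "1 \<le> (1 + r) * \<mu> ^ N" using r(1) \<mu>N by (intro mult_ge1_I) auto
  have "u j powr \<kappa> \<le> G"
    unfolding G_def \<mu>_def using u_j u_nonneg[of j] assms(2,4) r(1) m_ge \<kappa>_pos \<kappa>_less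
    by (intro powr_le_mult_power mult_ge1_I) (auto simp: r_def)
  then have sum_le: "growth_sum m \<kappa> u j \<le> r * m ^ N * (1 + real l * (m - 1))
      + real l * (c + real l) + 3 * real l * G + m ^ j * (1 / N - 1 / j)"
    using growth_step_sum_bound[OF assms(3,4) _ w] r(2) unfolding l_def by simp
  note l = polynomial_le_two_mult_power[OF m_ge assms(1), of l]
  (* Bernoulli: the factor 1 + (j - N) (m - 1) coming from the witness is at most m^(j - N) *)
  have "r * m ^ N * (1 + real l * (m - 1)) \<le> r * m ^ j"
    using Bernoulli_inequality[of "m - 1" l] m_ge r(1) mj by (simp add: mult_left_mono mult.assoc)
  moreover have "real l * (c + real l) \<le> 2 * (c + 1) * (1 + r) * (\<mu> ^ N * m ^ l)"
    using l(2) mult_left_mono[OF one_le, of "2 * (c + 1) * m ^ l"] assms(1) m_ge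
    by (simp add: algebra_simps)
  moreover have "3 * real l * G \<le> 6 * D * (1 + r) * (\<mu> ^ N * m ^ l)"
    using mult_right_mono[OF l(1), of G] assms(2) r(1) \<mu>N unfolding G_def by (simp add: algebra_simps)
  moreover have "\<mu> ^ N * m ^ l = m ^ j * (\<mu> / m) ^ N" using mj m_ge by (simp add: power_divide)
  ultimately have "growth_sum m \<kappa> u j
      \<le> m ^ j * (r + (2 * (c + 1) + 6 * D) * (1 + r) * (\<mu> / m) ^ N + (1 / N - 1 / j))"
    using sum_le by (simp add: algebra_simps)
  then have "growth_sum m \<kappa> u j / m ^ j
      \<le> r + (2 * (c + 1) + 6 * D) * (1 + r) * (\<mu> / m) ^ N + (1 / N - 1 / j)"
    using m_ge by (simp add: pos_divide_le_eq mult.commute)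
  then show ?thesis unfolding r_def \<mu>_def by simp
qed

theorem exponential_bound_from_witnesses:
  assumes "0 < \<theta>" "0 \<le> c" "1 \<le> N\<^sub>0"
    and witness: "\<And>N. N\<^sub>0 \<le> N \<Longrightarrow> \<exists>j>N.
      u j - 2 * u j powr \<kappa> \<le> (m - 1) * growth_sum m \<kappa> u N + c + real (j - N) \<and>
      \<theta> * u j - 2 * u j powr \<kappa> \<le> (m - 1) * growth_sum m \<kappa> u N + c"
  obtains B where "\<And>n. 1 \<le> n \<Longrightarrow> u n \<le> B * m ^ n"
proof -
  let ?z = "growth_sum m \<kappa> u"
  obtain D where D: "1 \<le> D"
    and u_step: "\<And>N j. 1 \<le> j \<Longrightarrow> \<theta> * u j - 2 * u j powr \<kappa> \<le> (m - 1) * ?z N + c \<Longrightarrow>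
                   u j \<le> D * (1 + ?z N / m ^ N) * m ^ N"
    using growth_step_u_bound[OF assms(1,2)] by blast
  obtain s where s: "strict_mono s" "N\<^sub>0 \<le> s 0" and s_witness: "\<And>i.
      u (s (Suc i)) - 2 * u (s (Suc i)) powr \<kappa> \<le> (m - 1) * ?z (s i) + c + real (s (Suc i) - s i) \<and>
      \<theta> * u (s (Suc i)) - 2 * u (s (Suc i)) powr \<kappa> \<le> (m - 1) * ?z (s i) + c"
    using witness_chain[of N\<^sub>0, OF witness] by blast
  have s_pos: "1 \<le> s i" for i
    using assms(3) s strict_mono_less_eq[OF s(1), of 0 i] by simp
  have s_less: "s i < s (Suc i)" for i using s(1) by (simp add: strict_mono_Suc_iff)
  have u_chain: "u (s (Suc i)) \<le> D * (1 + ?z (s i) / m ^ s i) * m ^ s i" for i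
    using s_witness[of i] by (intro u_step s_pos) blast
  have "0 \<le> m powr \<kappa> / m" "m powr \<kappa> / m < 1"
    using m_ge \<kappa>_less powr_less_mono[of \<kappa> 1 m] by auto
  then obtain Q where "0 \<le> Q" and Q: "\<And>i. ?z (s i) / m ^ s i \<le> Q"
  proof (rule bounded_along_chain[OF s(1)])
    show "0 \<le> 2 * (c + 1) + 6 * D" using assms(2) D by simp
    show "0 \<le> ?z N / m ^ N" for N using growth_sum_nonneg m_ge by simp
    show "?z (s (Suc i)) / m ^ s (Suc i) + 1 / s (Suc i) \<le> ?z (s i) / m ^ s i + 1 / s i
        + (2 * (c + 1) + 6 * D) * (1 + ?z (s i) / m ^ s i) * (m powr \<kappa> / m) ^ s i" for i
      using s_witness[of i] by (intro growth_step_ratio_bound[OF assms(2) D s_pos s_less u_chain]) blast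
  qed (rule that)
  have "u (s (Suc i)) \<le> D * (1 + Q) * m ^ s i" for i
  proof -
    have "u (s (Suc i)) \<le> D * (1 + ?z (s i) / m ^ s i) * m ^ s i" by (rule u_chain)
    also have "\<dots> \<le> D * (1 + Q) * m ^ s i"
      using Q[of i] D m_ge by (intro mult_right_mono mult_left_mono) auto
    finally show ?thesis .
  qed
  moreover have "0 \<le> D * (1 + Q)" "1 \<le> m" using \<open>0 \<le> Q\<close> D m_ge by simp_all
  ultimately show thesis
    using exponential_bound_from_chain[where u = u and s = s and m = m and C = "D * (1 + Q)"]
      s(1) s_pos[of 0] u_nonneg u_mono that
    by blast
qed

end

section \<open>Polynomials in several variables\<close>

lemma degvecs_le:
  assumes "e \<in> degvecs K d" "k \<in> {1..K}"
  shows "e k \<le> d"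
proof -
  have "e k \<le> (\<Sum>k=1..K. e k)" using assms(2) by (intro member_le_sum) auto
  then show ?thesis using assms(1) unfolding degvecs_def by simp
qed

lemma finite_degvecs: "finite (degvecs K d)"
proof -
  let ?extend = "\<lambda>f k. if k \<in> {1..K} then f k else 0"
  have "degvecs K d \<subseteq> ?extend ` PiE {1..K} (\<lambda>_. {0..d})"
  proof
    fix e assume e: "e \<in> degvecs K d"
    have "restrict e {1..K} \<in> PiE {1..K} (\<lambda>_. {0..d})" using degvecs_le[OF e] by simp
    moreover have "e = ?extend (restrict e {1..K})"
      using e unfolding degvecs_def by (auto simp: fun_eq_iff)
    ultimately show "e \<in> ?extend ` PiE {1..K} (\<lambda>_. {0..d})" by blast
  qed
  moreover have "finite (PiE {1..K} (\<lambda>_. {0..d}))" by (intro finite_PiE) auto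
  ultimately show ?thesis using finite_subset by blast
qed

lemma abs_prod_diff_le:
  fixes f g :: "'a \<Rightarrow> real"
  assumes "finite I" "1 \<le> B" "\<And>i. i \<in> I \<Longrightarrow> \<bar>f i\<bar> \<le> B \<and> \<bar>g i\<bar> \<le> B"
  shows "\<bar>prod f I - prod g I\<bar> \<le> B ^ card I * (\<Sum>i\<in>I. \<bar>f i - g i\<bar>)"
  using assms(1,3)
proof (induction I rule: finite_induct)
  case (insert x F)
  have fx: "\<bar>f x\<bar> \<le> B" and IH: "\<bar>prod f F - prod g F\<bar> \<le> B ^ card F * (\<Sum>i\<in>F. \<bar>f i - g i\<bar>)"
    using insert by auto
  have g_F: "\<bar>prod g F\<bar> \<le> B ^ card F"
    using insert by (simp add: abs_prod prod_mono[of F "\<lambda>i. \<bar>g i\<bar>" "\<lambda>_. B", simplified])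
  have B_pow: "B ^ card F \<le> B ^ Suc (card F)" using assms(2) by (intro power_increasing) auto
  have "prod f (insert x F) - prod g (insert x F) = f x * (prod f F - prod g F) + (f x - g x) * prod g F"
    using insert by (simp add: algebra_simps)
  then have "\<bar>prod f (insert x F) - prod g (insert x F)\<bar>
      \<le> \<bar>f x\<bar> * \<bar>prod f F - prod g F\<bar> + \<bar>f x - g x\<bar> * \<bar>prod g F\<bar>"
    by (simp add: abs_mult[symmetric] abs_triangle_ineq)
  also have "\<dots> \<le> B * (B ^ card F * (\<Sum>i\<in>F. \<bar>f i - g i\<bar>)) + \<bar>f x - g x\<bar> * B ^ Suc (card F)"
    using fx IH g_F B_pow by (intro add_mono mult_mono) auto
  also have "\<dots> = B ^ card (insert x F) * (\<Sum>i\<in>insert x F. \<bar>f i - g i\<bar>)"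
    using insert by (simp add: algebra_simps)
  finally show ?case .
qed simp

lemma abs_power_diff_le:
  fixes x y B :: real
  assumes "1 \<le> B" "\<bar>x\<bar> \<le> B" "\<bar>y\<bar> \<le> B"
  shows "\<bar>x ^ n - y ^ n\<bar> \<le> B ^ n * (real n * \<bar>x - y\<bar>)"
  using abs_prod_diff_le[of "{..<n}" B "\<lambda>_. x" "\<lambda>_. y"] assms by simp

lemma abs_monomial_diff_le:
  fixes x y :: "nat \<Rightarrow> real"
  assumes e: "e \<in> degvecs K d" and R: "1 \<le> R"
    and xy: "\<And>k. k \<in> {1..K} \<Longrightarrow> \<bar>x k\<bar> \<le> R \<and> \<bar>y k\<bar> \<le> R"
  shows "\<bar>(\<Prod>k=1..K. x k ^ e k) - (\<Prod>k=1..K. y k ^ e k)\<bar>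
    \<le> (R ^ d) ^ K * (R ^ d * real d) * (\<Sum>k=1..K. \<bar>x k - y k\<bar>)"
proof -
  have pow_le: "\<bar>z ^ e k\<bar> \<le> R ^ d" if "k \<in> {1..K}" "\<bar>z\<bar> \<le> R" for z k
  proof -
    have "\<bar>z ^ e k\<bar> \<le> R ^ e k" using that by (simp add: power_abs power_mono)
    also have "\<dots> \<le> R ^ d" using degvecs_le[OF e that(1)] R by (intro power_increasing) auto
    finally show ?thesis .
  qed
  have factor_le: "\<bar>x k ^ e k - y k ^ e k\<bar> \<le> R ^ d * real d * \<bar>x k - y k\<bar>" if k: "k \<in> {1..K}" for k
  proof -
    have "\<bar>x k ^ e k - y k ^ e k\<bar> \<le> R ^ e k * (real (e k) * \<bar>x k - y k\<bar>)"
      using xy[OF k] R by (intro abs_power_diff_le) auto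
    also have "\<dots> \<le> R ^ d * (real d * \<bar>x k - y k\<bar>)"
      using degvecs_le[OF e k] R by (intro mult_mono power_increasing mult_right_mono) auto
    finally show ?thesis by (simp add: mult.assoc)
  qed
  have "\<bar>(\<Prod>k=1..K. x k ^ e k) - (\<Prod>k=1..K. y k ^ e k)\<bar>
      \<le> (R ^ d) ^ K * (\<Sum>k=1..K. \<bar>x k ^ e k - y k ^ e k\<bar>)"
    using abs_prod_diff_le[of "{1..K}" "R ^ d"] xy pow_le R by (simp add: one_le_power)
  also have "\<dots> \<le> (R ^ d) ^ K * (\<Sum>k=1..K. R ^ d * real d * \<bar>x k - y k\<bar>)"
    using factor_le R by (intro mult_left_mono sum_mono) auto
  finally show ?thesis by (simp add: sum_distrib_left mult.assoc)
qed

lemma mpoly_eval_lipschitz: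
  assumes "1 \<le> R"
  obtains L where "0 \<le> L" and "\<And>x y. (\<And>k. k \<in> {1..K} \<Longrightarrow> \<bar>x k\<bar> \<le> R \<and> \<bar>y k\<bar> \<le> R) \<Longrightarrow>
    \<bar>mpoly_eval K d c x - mpoly_eval K d c y\<bar> \<le> L * (\<Sum>k=1..K. \<bar>x k - y k\<bar>)"
proof
  let ?M = "(R ^ d) ^ K * (R ^ d * real d)"
  show "0 \<le> (\<Sum>e\<in>degvecs K d. \<bar>real_of_int (c e)\<bar>) * ?M"
    using assms by (intro mult_nonneg_nonneg sum_nonneg) auto
  fix x y :: "nat \<Rightarrow> real"
  assume xy: "\<And>k. k \<in> {1..K} \<Longrightarrow> \<bar>x k\<bar> \<le> R \<and> \<bar>y k\<bar> \<le> R"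
  have "\<bar>mpoly_eval K d c x - mpoly_eval K d c y\<bar>
      = \<bar>\<Sum>e\<in>degvecs K d. real_of_int (c e) * ((\<Prod>k=1..K. x k ^ e k) - (\<Prod>k=1..K. y k ^ e k))\<bar>"
    unfolding mpoly_eval_def by (simp add: sum_subtractf right_diff_distrib)
  also have "\<dots> \<le> (\<Sum>e\<in>degvecs K d. \<bar>real_of_int (c e)\<bar> * (?M * (\<Sum>k=1..K. \<bar>x k - y k\<bar>)))"
    using abs_monomial_diff_le[OF _ assms xy]
    by (intro order.trans[OF sum_abs] sum_mono) (auto simp: abs_mult mult_left_mono mult.assoc)
  finally show "\<bar>mpoly_eval K d c x - mpoly_eval K d c y\<bar>
      \<le> (\<Sum>e\<in>degvecs K d. \<bar>real_of_int (c e)\<bar>) * ?M * (\<Sum>k=1..K. \<bar>x k - y k\<bar>)"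
    by (simp add: sum_distrib_right mult.assoc)
qed

lemma mpoly_eval_near_root:
  fixes x :: "nat \<Rightarrow> nat \<Rightarrow> real"
  assumes lim: "\<And>k. k \<in> {1..K} \<Longrightarrow> x k \<longlonglongrightarrow> \<xi> k" and root: "mpoly_eval K d c \<xi> = 0"
  obtains L where "0 < L" and "\<And>N. \<bar>mpoly_eval K d c (\<lambda>k. x k N)\<bar> \<le> L * (\<Sum>k=1..K. \<bar>\<xi> k - x k N\<bar>)"
proof -
  have "\<forall>k\<in>{1..K}. \<exists>R. \<forall>N. \<bar>x k N\<bar> \<le> R"
  proof
    fix k assume k: "k \<in> {1..K}"
    have "Bseq (x k)" using lim[OF k] by (intro convergent_imp_Bseq convergentI)
    then show "\<exists>R. \<forall>N. \<bar>x k N\<bar> \<le> R" unfolding Bseq_def by auto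
  qed
  from bchoice[OF this] obtain R\<^sub>k where R\<^sub>k: "\<forall>k\<in>{1..K}. \<forall>N. \<bar>x k N\<bar> \<le> R\<^sub>k k" ..
  define R where "R = 1 + (\<Sum>k=1..K. \<bar>R\<^sub>k k\<bar>)"
  have x_le: "\<bar>x k N\<bar> \<le> R" if k: "k \<in> {1..K}" for k N
  proof -
    have "\<bar>R\<^sub>k k\<bar> \<le> (\<Sum>k=1..K. \<bar>R\<^sub>k k\<bar>)" using k by (intro member_le_sum) auto
    moreover have "\<bar>x k N\<bar> \<le> R\<^sub>k k" using R\<^sub>k k by blast
    ultimately show ?thesis unfolding R_def by linarith
  qed
  have \<xi>_le: "\<bar>\<xi> k\<bar> \<le> R" if k: "k \<in> {1..K}" for k
    using tendsto_rabs[OF lim[OF k]] x_le[OF k] by (intro LIMSEQ_le_const2) auto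
  have "1 \<le> R" unfolding R_def by (simp add: sum_nonneg)
  then obtain L where L: "0 \<le> L" and lip: "\<And>x y. (\<And>k. k \<in> {1..K} \<Longrightarrow> \<bar>x k\<bar> \<le> R \<and> \<bar>y k\<bar> \<le> R) \<Longrightarrow>
      \<bar>mpoly_eval K d c x - mpoly_eval K d c y\<bar> \<le> L * (\<Sum>k=1..K. \<bar>x k - y k\<bar>)"
    by (rule mpoly_eval_lipschitz[where K = K and d = d and c = c]) blast
  show thesis
  proof (rule that)
    show "0 < L + 1" using L by simp
    fix N
    have "\<bar>mpoly_eval K d c (\<lambda>k. x k N)\<bar> \<le> L * (\<Sum>k=1..K. \<bar>x k N - \<xi> k\<bar>)"
      using lip[of "\<lambda>k. x k N" \<xi>] x_le \<xi>_le root by simp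
    also have "\<dots> = L * (\<Sum>k=1..K. \<bar>\<xi> k - x k N\<bar>)" by (simp add: abs_minus_commute)
    also have "\<dots> \<le> (L + 1) * (\<Sum>k=1..K. \<bar>\<xi> k - x k N\<bar>)"
      by (intro mult_right_mono sum_nonneg) auto
    finally show "\<bar>mpoly_eval K d c (\<lambda>k. x k N)\<bar> \<le> (L + 1) * (\<Sum>k=1..K. \<bar>\<xi> k - x k N\<bar>)" .
  qed
qed

section \<open>Partial sums and the Liouville-type gap\<close>

lemma partial_alpha_diff:
  assumes "N \<le> M"
  shows "partial_alpha a b k M - partial_alpha a b k N
    = (\<Sum>n = Suc N..M. real_of_int (b k n) / real_of_int (a k n))"
proof -
  have "{1..M} = {1..N} \<union> {Suc N..M}" "{1..N} \<inter> {Suc N..M} = {}" using assms by auto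
  then show ?thesis unfolding partial_alpha_def by (simp add: sum.union_disjoint)
qed

lemma partial_alpha_mult_prod_in_Ints:
  assumes "\<And>n. n \<in> {1..N} \<Longrightarrow> a k n \<noteq> 0"
  shows "partial_alpha a b k N * real_of_int (\<Prod>n=1..N. a k n) \<in> \<int>"
  unfolding partial_alpha_def sum_distrib_right
proof (intro Ints_sum)
  fix n assume n: "n \<in> {1..N}"
  have eq: "real_of_int (b k n) / real_of_int (a k n) * real_of_int (\<Prod>n=1..N. a k n)
      = real_of_int (b k n * (\<Prod>m\<in>{1..N} - {n}. a k m))"
    using assms[OF n] n by (simp add: prod.remove)
  show "real_of_int (b k n) / real_of_int (a k n) * real_of_int (\<Prod>n=1..N. a k n) \<in> \<int>"
    unfolding eq by (rule Ints_of_int)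
qed

lemma mpoly_eval_mult_power_in_Ints:
  fixes q :: "nat \<Rightarrow> int" and x :: "nat \<Rightarrow> real"
  assumes "\<And>k. k \<in> {1..K} \<Longrightarrow> x k * real_of_int (q k) \<in> \<int>"
  shows "real_of_int (\<Prod>k=1..K. q k) ^ d * mpoly_eval K d c x \<in> \<int>"
proof -
  have "real_of_int (\<Prod>k=1..K. q k) ^ d * (real_of_int (c e) * (\<Prod>k=1..K. x k ^ e k))
      = real_of_int (c e) * (\<Prod>k=1..K. (x k * real_of_int (q k)) ^ e k * real_of_int (q k) ^ (d - e k))"
    if e: "e \<in> degvecs K d" for e
  proof -
    have "real_of_int (q k) ^ d = real_of_int (q k) ^ e k * real_of_int (q k) ^ (d - e k)"
      if k: "k \<in> {1..K}" for k
      using degvecs_le[OF e k] by (simp flip: power_add)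
    then have "real_of_int (\<Prod>k=1..K. q k) ^ d
        = (\<Prod>k=1..K. real_of_int (q k) ^ e k * real_of_int (q k) ^ (d - e k))"
      by (simp add: prod_power_distrib)
    then show ?thesis
      by (simp add: prod.distrib[symmetric] power_mult_distrib mult_ac)
  qed
  then have "real_of_int (\<Prod>k=1..K. q k) ^ d * mpoly_eval K d c x
      = (\<Sum>e\<in>degvecs K d. real_of_int (c e)
          * (\<Prod>k=1..K. (x k * real_of_int (q k)) ^ e k * real_of_int (q k) ^ (d - e k)))"
    unfolding mpoly_eval_def sum_distrib_left by (intro sum.cong) auto
  also have "\<dots> \<in> \<int>"
  proof (intro Ints_sum Ints_mult[OF Ints_of_int] Ints_prod)
    fix k assume "k \<in> {1..K}"
    then show "(x k * real_of_int (q k)) ^ e k * real_of_int (q k) ^ (d - e k) \<in> \<int>" for e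
      using assms by (intro Ints_mult Ints_power[OF assms] Ints_power[OF Ints_of_int])
  qed
  finally show ?thesis .
qed

lemma mpoly_eval_partial_alpha_lower_bound:
  fixes h :: "nat \<Rightarrow> real"
  assumes nz: "\<And>k n. k \<in> {1..K} \<Longrightarrow> n \<in> {1..N} \<Longrightarrow> a k n \<noteq> 0"
    and a_le: "\<And>k n. k \<in> {1..K} \<Longrightarrow> n \<in> {1..N} \<Longrightarrow> \<bar>a k n\<bar> \<le> 2 powr h n"
    and ne: "mpoly_eval K d c (\<lambda>k. partial_alpha a b k N) \<noteq> 0"
  shows "1 \<le> 2 powr (real (K * d) * (\<Sum>n=1..N. h n)) * \<bar>mpoly_eval K d c (\<lambda>k. partial_alpha a b k N)\<bar>"
proof -
  define Q where "Q = (\<Prod>k=1..K. \<Prod>n=1..N. a k n)"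
  have "real_of_int Q ^ d * mpoly_eval K d c (\<lambda>k. partial_alpha a b k N) \<in> \<int>"
    unfolding Q_def using nz by (intro mpoly_eval_mult_power_in_Ints partial_alpha_mult_prod_in_Ints)
  moreover have "Q \<noteq> 0" unfolding Q_def using nz by simp
  ultimately have "1 \<le> \<bar>real_of_int Q\<bar> ^ d * \<bar>mpoly_eval K d c (\<lambda>k. partial_alpha a b k N)\<bar>"
    using ne Ints_nonzero_abs_ge1 by (fastforce simp: abs_mult power_abs)
  also have "\<bar>real_of_int Q\<bar> ^ d \<le> 2 powr (real (K * d) * (\<Sum>n=1..N. h n))"
  proof -
    have "\<bar>real_of_int Q\<bar> = (\<Prod>k=1..K. \<Prod>n=1..N. \<bar>real_of_int (a k n)\<bar>)"
      unfolding Q_def by (simp add: abs_prod)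
    also have "\<dots> \<le> (\<Prod>k=1..K. \<Prod>n=1..N. 2 powr h n)"
      using a_le by (intro prod_mono conjI prod_nonneg) auto
    also have "\<dots> = 2 powr (real K * (\<Sum>n=1..N. h n))"
      by (simp add: powr_sum[symmetric] powr_power)
    finally have "\<bar>real_of_int Q\<bar> ^ d \<le> (2 powr (real K * (\<Sum>n=1..N. h n))) ^ d"
      by (intro power_mono) auto
    then show ?thesis by (simp add: powr_power mult_ac)
  qed
  finally show ?thesis by (simp add: mult_right_mono)
qed

lemma exists_ge_mean:
  fixes x :: "'a \<Rightarrow> real"
  assumes "finite I" "I \<noteq> {}" "t \<le> (\<Sum>i\<in>I. x i)"
  shows "\<exists>i\<in>I. t / card I \<le> x i"
proof (rule ccontr)
  assume "\<not> ?thesis"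
  then have "(\<Sum>i\<in>I. x i) < (\<Sum>i\<in>I. t / card I)"
    using assms(1,2) by (intro sum_strict_mono) (auto simp: not_le)
  also have "\<dots> = t" using assms(1,2) by simp
  finally show False using assms(3) by simp
qed

lemma exists_large_tail_term:
  fixes x f w :: "nat \<Rightarrow> real"
  assumes lim: "x \<longlonglongrightarrow> \<xi>"
    and incr: "\<And>M. N \<le> M \<Longrightarrow> x M - x N = (\<Sum>n = Suc N..M. f n)"
    and w: "\<And>n. 0 \<le> w n" "\<And>M. (\<Sum>n = Suc N..M. w n) \<le> 1"
    and \<delta>: "0 \<le> \<delta>" "\<delta> < \<bar>\<xi> - x N\<bar>"
  shows "\<exists>n>N. \<delta> * w n < \<bar>f n\<bar>"
proof (rule ccontr)
  assume "\<not> ?thesis"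
  then have small: "\<bar>f n\<bar> \<le> \<delta> * w n" if "N < n" for n using that not_less by blast
  have "\<bar>x M - x N\<bar> \<le> \<delta>" if "N \<le> M" for M
  proof -
    have "\<bar>x M - x N\<bar> \<le> (\<Sum>n = Suc N..M. \<bar>f n\<bar>)" using incr[OF that] by (simp add: sum_abs)
    also have "\<dots> \<le> (\<Sum>n = Suc N..M. \<delta> * w n)" using small by (intro sum_mono) auto
    also have "\<dots> \<le> \<delta>" using w(2)[of M] \<delta>(1) by (simp add: sum_distrib_left[symmetric] mult_left_le)
    finally show ?thesis .
  qed
  then have "\<bar>\<xi> - x N\<bar> \<le> \<delta>"
    using tendsto_rabs[OF tendsto_diff[OF lim tendsto_const[of "x N"]]]
    by (intro LIMSEQ_le_const2) auto
  with \<delta>(2) show False by simp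
qed

(* Clearing denominators bounds |P(alpha_N)| from below; as P(xi) = 0, some tail
   xi_k - alpha_{k,N} is then too large to be dominated by any weight w of total mass 1. *)
lemma partial_alpha_gap:
  fixes a b :: "nat \<Rightarrow> nat \<Rightarrow> int" and h g \<xi> :: "nat \<Rightarrow> real"
  assumes K: "0 < K"
    and nz: "\<And>k n. k \<in> {1..K} \<Longrightarrow> 1 \<le> n \<Longrightarrow> a k n \<noteq> 0"
    and lim: "\<And>k. k \<in> {1..K} \<Longrightarrow> partial_alpha a b k \<longlonglongrightarrow> \<xi> k"
    and root: "mpoly_eval K d c \<xi> = 0"
    and a_le: "\<And>k n. k \<in> {1..K} \<Longrightarrow> 1 \<le> n \<Longrightarrow> \<bar>real_of_int (a k n)\<bar> \<le> 2 powr h n"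
    and q_le: "\<And>k n. k \<in> {1..K} \<Longrightarrow> 1 \<le> n \<Longrightarrow>
      \<bar>real_of_int (b k n) / real_of_int (a k n)\<bar> \<le> 2 powr (- g n)"
  obtains C where "0 < C"
    and "\<And>N w. mpoly_eval K d c (\<lambda>k. partial_alpha a b k N) \<noteq> 0 \<Longrightarrow> (\<And>n. 0 \<le> w n) \<Longrightarrow>
      (\<And>M. (\<Sum>n = Suc N..M. w n) \<le> 1) \<Longrightarrow>
      \<exists>j>N. w j < C * 2 powr (real (K * d) * (\<Sum>n=1..N. h n) - g j)"
proof -
  obtain L where L: "0 < L" and near: "\<And>N. \<bar>mpoly_eval K d c (\<lambda>k. partial_alpha a b k N)\<bar>
      \<le> L * (\<Sum>k=1..K. \<bar>\<xi> k - partial_alpha a b k N\<bar>)"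
    using mpoly_eval_near_root[where x = "partial_alpha a b", OF lim root] by blast
  show thesis
  proof (rule that)
    show "0 < 2 * L * K" using L K by simp
    fix N and w :: "nat \<Rightarrow> real"
    assume ne: "mpoly_eval K d c (\<lambda>k. partial_alpha a b k N) \<noteq> 0"
      and w: "\<And>n. 0 \<le> w n" "\<And>M. (\<Sum>n = Suc N..M. w n) \<le> 1"
    define H where "H = 2 powr (real (K * d) * (\<Sum>n=1..N. h n))"
    have H: "0 < H" unfolding H_def by simp
    have "1 \<le> H * \<bar>mpoly_eval K d c (\<lambda>k. partial_alpha a b k N)\<bar>"
      unfolding H_def using nz a_le ne by (intro mpoly_eval_partial_alpha_lower_bound) auto
    also have "\<dots> \<le> H * (L * (\<Sum>k=1..K. \<bar>\<xi> k - partial_alpha a b k N\<bar>))"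
      using near H by (intro mult_left_mono) auto
    finally have "1 / (H * L) \<le> (\<Sum>k=1..K. \<bar>\<xi> k - partial_alpha a b k N\<bar>)"
      using H L by (simp add: field_simps)
    then have "\<exists>k\<in>{1..K}. 1 / (H * L) / card {1..K} \<le> \<bar>\<xi> k - partial_alpha a b k N\<bar>"
      using K by (intro exists_ge_mean) auto
    then obtain k where k: "k \<in> {1..K}"
      and far: "1 / (H * L * K) \<le> \<bar>\<xi> k - partial_alpha a b k N\<bar>" by auto
    define \<delta> where "\<delta> = 1 / (2 * H * L * K)"
    have \<delta>: "0 < \<delta>" "\<delta> < \<bar>\<xi> k - partial_alpha a b k N\<bar>"
      unfolding \<delta>_def using H L K far by (auto simp: field_simps)
    obtain j where j: "N < j" "\<delta> * w j < \<bar>real_of_int (b k j) / real_of_int (a k j)\<bar>"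
      using exists_large_tail_term[OF lim[OF k] partial_alpha_diff w less_imp_le[OF \<delta>(1)] \<delta>(2)] by blast
    then have "w j < 2 powr (- g j) / \<delta>"
      using q_le[OF k, of j] \<delta>(1) by (simp add: pos_less_divide_eq mult.commute)
    also have "\<dots> = 2 * L * K * 2 powr (real (K * d) * (\<Sum>n=1..N. h n) - g j)"
      unfolding \<delta>_def H_def by (simp add: powr_diff powr_minus divide_simps)
    finally show "\<exists>j>N. w j < 2 * L * K * 2 powr (real (K * d) * (\<Sum>n=1..N. h n) - g j)"
      using j(1) by blast
  qed
qed

lemma sum_geometric_tail:
  assumes "N \<le> M"
  shows "(\<Sum>n = Suc N..M. (1 / 2 :: real) ^ (n - N)) = 1 - (1 / 2) ^ (M - N)"
  using assms
proof (induction M rule: dec_induct)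
  case (step M)
  then have "Suc M - N = Suc (M - N)" by simp
  then show ?case using step by simp
qed simp

lemma log_less_of_less_mult_powr:
  fixes x C t :: real
  assumes "0 < x" "0 < C" "x < C * 2 powr t"
  shows "log 2 x < log 2 C + t"
proof -
  have "log 2 x < log 2 (C * 2 powr t)" using assms by (intro log_less) auto
  then show ?thesis using assms(2) by (simp add: log_mult)
qed

lemma mixed_weight_sum_le_one:
  fixes p :: "nat \<Rightarrow> real"
  assumes "summable p" "\<And>n. 0 \<le> p n" "0 < suminf p"
  shows "(\<Sum>n = Suc N..M. ((1 / 2) ^ (n - N) + p n / suminf p) / 2) \<le> 1"
proof -
  have "(\<Sum>n = Suc N..M. (1 / 2 :: real) ^ (n - N)) \<le> 1"
    by (cases "N \<le> M") (simp_all add: sum_geometric_tail)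
  moreover have "(\<Sum>n = Suc N..M. p n) \<le> suminf p" using assms(1,2) by (intro sum_le_suminf) auto
  then have "(\<Sum>n = Suc N..M. p n / suminf p) \<le> 1"
    using assms(3) by (simp add: sum_divide_distrib[symmetric])
  ultimately show ?thesis by (simp add: sum.distrib sum_divide_distrib[symmetric])
qed

lemma exists_index_from_weight_test:
  fixes g :: "nat \<Rightarrow> real"
  assumes "0 < \<eta>" "0 < C"
  obtains c where "0 \<le> c"
    and "\<And>N Y. (\<And>w. (\<And>n. 0 \<le> w n) \<Longrightarrow> (\<And>M. (\<Sum>n = Suc N..M. w n) \<le> 1) \<Longrightarrow>
               \<exists>j>N. w j < C * 2 powr (Y - g j)) \<Longrightarrow>
      \<exists>j>N. g j \<le> Y + c + real (j - N) \<and> g j \<le> Y + c + (1 + \<eta>) * log 2 (real j)"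
proof -
  define p where "p n = real n powr - (1 + \<eta>)" for n :: nat
  have p: "summable p" "\<And>n. 0 \<le> p n" unfolding p_def using assms(1) by (simp_all add: summable_real_powr_iff)
  define Z where "Z = suminf p"
  have Z: "1 \<le> Z" using sum_le_suminf[OF p(1), of "{1}"] p(2) by (simp add: Z_def p_def)
  define c where "c = \<bar>log 2 C\<bar> + 1 + log 2 Z"
  show thesis
  proof (rule that)
    show "0 \<le> c" unfolding c_def using Z by simp
    fix N Y
    assume test: "\<And>w. (\<And>n. 0 \<le> w n) \<Longrightarrow> (\<And>M. (\<Sum>n = Suc N..M. w n) \<le> 1) \<Longrightarrow>
      \<exists>j>N. w j < C * 2 powr (Y - g j)"
    (* one weight serving both bounds: a geometric and a polynomially decaying part *)
    define w where "w n = ((1 / 2) ^ (n - N) + p n / Z) / 2" for n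
    have "(\<Sum>n = Suc N..M. w n) \<le> 1" for M
      unfolding w_def Z_def using p Z by (intro mixed_weight_sum_le_one) (auto simp: Z_def)
    moreover have "0 \<le> w n" for n unfolding w_def using p(2) Z by simp
    ultimately obtain j where j: "N < j" "w j < C * 2 powr (Y - g j)" using test by blast
    have p_pos: "0 < p j" unfolding p_def using j(1) by simp
    have w_pos: "0 < w j" unfolding w_def using p_pos Z by (simp add: add_pos_nonneg)
    have log_w: "log 2 (w j) < log 2 C + (Y - g j)"
      using log_less_of_less_mult_powr[OF w_pos assms(2) j(2)] .
    have "log 2 ((1 / 2) ^ (j - N) / 2) \<le> log 2 (w j)"
      unfolding w_def using p_pos Z by (intro log_mono) (auto simp: divide_right_mono)
    then have geo: "- real (j - N) - 1 \<le> log 2 (w j)" by (simp add: log_divide log_nat_power)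
    have "log 2 (p j / Z / 2) \<le> log 2 (w j)"
      unfolding w_def using p_pos Z by (intro log_mono) (auto simp: divide_right_mono)
    then have poly: "- ((1 + \<eta>) * log 2 (real j)) - log 2 Z - 1 \<le> log 2 (w j)"
      using p_pos Z j(1) unfolding p_def by (simp add: log_divide log_powr log_mult algebra_simps)
    have "0 \<le> log 2 Z" using Z by simp
    then have "g j \<le> Y + c + real (j - N) \<and> g j \<le> Y + c + (1 + \<eta>) * log 2 (real j)"
      using log_w geo poly abs_ge_self[of "log 2 C"] unfolding c_def by linarith
    then show "\<exists>j>N. g j \<le> Y + c + real (j - N) \<and> g j \<le> Y + c + (1 + \<eta>) * log 2 (real j)"
      using j(1) by blast
  qed
qed

lemma abs_quotient_le_powr:
  fixes A \<alpha> \<beta> \<kappa> :: real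
  assumes A: "1 \<le> A"
    and \<alpha>: "A * 2 powr (- (log 2 A powr \<kappa>)) \<le> \<bar>\<alpha>\<bar>" and \<beta>: "\<bar>\<beta>\<bar> \<le> 2 powr (log 2 A powr \<kappa>)"
  shows "\<bar>\<beta> / \<alpha>\<bar> \<le> 2 powr (- (log 2 A - 2 * log 2 A powr \<kappa>))"
proof -
  have "2 powr (log 2 A - log 2 A powr \<kappa>) \<le> \<bar>\<alpha>\<bar>"
    using \<alpha> A by (simp add: powr_diff powr_minus divide_simps)
  then have "\<bar>\<beta> / \<alpha>\<bar> \<le> 2 powr (log 2 A powr \<kappa>) / 2 powr (log 2 A - log 2 A powr \<kappa>)"
    unfolding abs_divide using \<beta> by (intro frac_le) auto
  also have "\<dots> = 2 powr (- (log 2 A - 2 * log 2 A powr \<kappa>))" by (simp add: powr_diff[symmetric])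
  finally show ?thesis .
qed

lemma abs_le_powr_of_le_max:
  fixes A \<alpha> \<kappa> t :: real
  assumes A: "1 \<le> A" and t: "0 \<le> t"
    and \<alpha>: "\<bar>\<alpha>\<bar> \<le> max (A * 2 powr (log 2 A powr \<kappa>)) (2 powr t)"
  shows "\<bar>\<alpha>\<bar> \<le> 2 powr (log 2 A + log 2 A powr \<kappa> + t)"
proof -
  have "A * 2 powr (log 2 A powr \<kappa>) = 2 powr (log 2 A + log 2 A powr \<kappa>)"
    using A by (simp add: powr_add)
  also have "\<dots> \<le> 2 powr (log 2 A + log 2 A powr \<kappa> + t)" using t by simp
  finally have "A * 2 powr (log 2 A powr \<kappa>) \<le> 2 powr (log 2 A + log 2 A powr \<kappa> + t)" .
  moreover have "2 powr t \<le> 2 powr (log 2 A + log 2 A powr \<kappa> + t)" using A by simp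
  ultimately show ?thesis using order_trans[OF \<alpha> max.boundedI] by blast
qed

context
  fixes \<epsilon> :: real and A :: "nat \<Rightarrow> real"
  assumes \<epsilon>: "0 < \<epsilon>" and A: "\<And>n. 1 \<le> n \<Longrightarrow> real n powr (1 + \<epsilon>) \<le> A n \<and> A n \<le> A (n + 1)"
begin

lemma polynomially_growing_ge_one: "1 \<le> n \<Longrightarrow> 1 \<le> A n"
  using A[of n] ge_one_powr_ge_zero[of "real n" "1 + \<epsilon>"] \<epsilon> by simp

lemma polynomially_growing_log_mono:
  assumes "1 \<le> n" "n \<le> j"
  shows "log 2 (A n) \<le> log 2 (A j)"
proof -
  have "A n \<le> A j" using assms(2)
  proof (induction j rule: dec_induct)
    case (step j)
    then show ?case using A[of j] assms(1) by simp
  qed simp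
  then show ?thesis using polynomially_growing_ge_one[OF assms(1)] by simp
qed

lemma polynomially_growing_log_lower: "1 \<le> n \<Longrightarrow> (1 + \<epsilon>) * log 2 n \<le> log 2 (A n)"
  using A[of n] log_mono[of 2 "real n powr (1 + \<epsilon>)" "A n"] by (simp add: log_powr)

end

lemmas polynomially_growing =
  polynomially_growing_ge_one polynomially_growing_log_mono polynomially_growing_log_lower

lemma limsup_root_le_of_log_le:
  fixes x :: "nat \<Rightarrow> real"
  assumes "0 < m" "\<And>n. 1 \<le> n \<Longrightarrow> 0 < x n" "\<And>n. 1 \<le> n \<Longrightarrow> log 2 (x n) \<le> B * m ^ n"
  shows "limsup (\<lambda>n. ereal (x n powr (1 / m ^ n))) \<le> ereal (2 powr B)"
proof (intro Limsup_bounded eventually_sequentiallyI)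
  fix n :: nat assume n: "1 \<le> n"
  have "x n powr (1 / m ^ n) = (2 powr log 2 (x n)) powr (1 / m ^ n)" using assms(2)[OF n] by simp
  also have "\<dots> \<le> (2 powr (B * m ^ n)) powr (1 / m ^ n)"
    using assms(1) assms(3)[OF n] by (intro powr_mono2) auto
  also have "\<dots> = 2 powr B" using assms(1) by (simp add: powr_powr)
  finally show "ereal (x n powr (1 / m ^ n)) \<le> ereal (2 powr B)" by simp
qed


lemma growth_witnesses_of_root:
  fixes a b :: "nat \<Rightarrow> nat \<Rightarrow> int" and u \<xi> :: "nat \<Rightarrow> real" and m \<kappa> \<epsilon> :: real
  assumes "0 < K" "0 < \<epsilon>" and m: "m = real (K * d + 1)"
    and nz: "\<And>k n. k \<in> {1..K} \<Longrightarrow> 1 \<le> n \<Longrightarrow> a k n \<noteq> 0"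
    and lim: "\<And>k. k \<in> {1..K} \<Longrightarrow> partial_alpha a b k \<longlonglongrightarrow> \<xi> k"
    and root: "mpoly_eval K d c \<xi> = 0"
    and ev: "\<forall>\<^sub>F N in sequentially. mpoly_eval K d c (\<lambda>k. partial_alpha a b k N) \<noteq> 0"
    and a_le: "\<And>k n. k \<in> {1..K} \<Longrightarrow> 1 \<le> n \<Longrightarrow>
      \<bar>real_of_int (a k n)\<bar> \<le> 2 powr (u n + u n powr \<kappa> + real n powr (-3) * m ^ n)"
    and q_le: "\<And>k n. k \<in> {1..K} \<Longrightarrow> 1 \<le> n \<Longrightarrow>
      \<bar>real_of_int (b k n) / real_of_int (a k n)\<bar> \<le> 2 powr (- (u n - 2 * u n powr \<kappa>))"
    and u_lower: "\<And>n. 1 \<le> n \<Longrightarrow> (1 + \<epsilon>) * log 2 n \<le> u n"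
  obtains \<theta> c' N\<^sub>0 where "0 < \<theta>" "0 \<le> c'" "1 \<le> N\<^sub>0"
    and "\<And>N. N\<^sub>0 \<le> N \<Longrightarrow> \<exists>j>N.
      u j - 2 * u j powr \<kappa> \<le> (m - 1) * growth_sum m \<kappa> u N + c' + real (j - N) \<and>
      \<theta> * u j - 2 * u j powr \<kappa> \<le> (m - 1) * growth_sum m \<kappa> u N + c'"
proof -
  have m1: "m - 1 = real (K * d)" using m by simp
  obtain C where "0 < C" and gap: "\<And>N w. mpoly_eval K d c (\<lambda>k. partial_alpha a b k N) \<noteq> 0 \<Longrightarrow>
      (\<And>n. 0 \<le> w n) \<Longrightarrow> (\<And>M. (\<Sum>n = Suc N..M. w n) \<le> 1) \<Longrightarrow>
      \<exists>j>N. w j < C * 2 powr ((m - 1) * growth_sum m \<kappa> u N - (u j - 2 * u j powr \<kappa>))"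
    using partial_alpha_gap[OF \<open>0 < K\<close> _ lim root a_le q_le] nz unfolding growth_sum_def m1 by blast
  have "0 < \<epsilon> / 2" using \<open>0 < \<epsilon>\<close> by simp
  then obtain c' where "0 \<le> c'" and index: "\<And>N Y.
      (\<And>w. (\<And>n. 0 \<le> w n) \<Longrightarrow> (\<And>M. (\<Sum>n = Suc N..M. w n) \<le> 1) \<Longrightarrow>
        \<exists>j>N. w j < C * 2 powr (Y - (u j - 2 * u j powr \<kappa>))) \<Longrightarrow>
      \<exists>j>N. u j - 2 * u j powr \<kappa> \<le> Y + c' + real (j - N)
        \<and> u j - 2 * u j powr \<kappa> \<le> Y + c' + (1 + \<epsilon> / 2) * log 2 (real j)"
    using exists_index_from_weight_test[where g = "\<lambda>j. u j - 2 * u j powr \<kappa>", OF _ \<open>0 < C\<close>] by blast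
  obtain N\<^sub>1 where N\<^sub>1: "\<And>N. N\<^sub>1 \<le> N \<Longrightarrow> mpoly_eval K d c (\<lambda>k. partial_alpha a b k N) \<noteq> 0"
    using ev unfolding eventually_sequentially by blast
  define \<theta> where "\<theta> = 1 - (1 + \<epsilon> / 2) / (1 + \<epsilon>)"
  show thesis
  proof (rule that)
    show "0 < \<theta>" unfolding \<theta>_def using \<open>0 < \<epsilon>\<close> by (simp add: field_simps)
    show "0 \<le> c'" "1 \<le> max N\<^sub>1 1" by (fact \<open>0 \<le> c'\<close>) simp
    fix N assume N: "max N\<^sub>1 1 \<le> N"
    have "\<exists>j>N. u j - 2 * u j powr \<kappa> \<le> (m - 1) * growth_sum m \<kappa> u N + c' + real (j - N)
        \<and> u j - 2 * u j powr \<kappa> \<le> (m - 1) * growth_sum m \<kappa> u N + c' + (1 + \<epsilon> / 2) * log 2 (real j)"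
      using N by (intro index gap N\<^sub>1) auto
    then obtain j where j: "N < j"
      and close: "u j - 2 * u j powr \<kappa> \<le> (m - 1) * growth_sum m \<kappa> u N + c' + real (j - N)"
      and far: "u j - 2 * u j powr \<kappa> \<le> (m - 1) * growth_sum m \<kappa> u N + c' + (1 + \<epsilon> / 2) * log 2 (real j)"
      by blast
    have "(1 + \<epsilon> / 2) * log 2 (real j) = (1 + \<epsilon> / 2) / (1 + \<epsilon>) * ((1 + \<epsilon>) * log 2 (real j))"
      using \<open>0 < \<epsilon>\<close> by simp
    also have "\<dots> \<le> (1 + \<epsilon> / 2) / (1 + \<epsilon>) * u j"
      using u_lower[of j] j \<open>0 < \<epsilon>\<close> by (intro mult_left_mono) auto
    also have "\<dots> = u j - \<theta> * u j" unfolding \<theta>_def by (simp add: algebra_simps)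
    finally show "\<exists>j>N. u j - 2 * u j powr \<kappa> \<le> (m - 1) * growth_sum m \<kappa> u N + c' + real (j - N) \<and>
        \<theta> * u j - 2 * u j powr \<kappa> \<le> (m - 1) * growth_sum m \<kappa> u N + c'"
      using j close far by auto
  qed
qed

theorem lemma8:
  fixes d K :: nat and a b :: "nat \<Rightarrow> nat \<Rightarrow> int" and A :: "nat \<Rightarrow> int"
    and \<epsilon> \<kappa> :: real and c :: "(nat \<Rightarrow> nat) \<Rightarrow> int"
  assumes "d > 0" and "K > 0"
    and nz: "\<And>k n. k \<in> {1..K} \<Longrightarrow> n \<ge> 1 \<Longrightarrow> a k n \<noteq> 0 \<and> b k n \<noteq> 0"
    and conv: "\<And>k. k \<in> {1..K} \<Longrightarrow> convergent (partial_alpha a b k)"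
    and "\<epsilon> > 0" and "\<kappa> > 0" and "\<kappa> < 1"
    and A_low: "\<And>n. n \<ge> 1 \<Longrightarrow> real n powr (1 + \<epsilon>) \<le> A n \<and> A n \<le> A (n + 1)"
    and a_low: "\<And>k n. k \<in> {1..K} \<Longrightarrow> n \<ge> 1 \<Longrightarrow>
        A n * 2 powr (- ((log 2 (A n)) powr \<kappa>)) \<le> \<bar>a k n\<bar>"
    and a_up: "\<And>k n. k \<in> {1..K} \<Longrightarrow> n \<ge> 1 \<Longrightarrow>
        \<bar>a k n\<bar> \<le> max (A n * 2 powr ((log 2 (A n)) powr \<kappa>))
                          (2 powr (real n powr (-3) * real (K * d + 1) ^ n))"
    and b_up: "\<And>k n. k \<in> {1..K} \<Longrightarrow> n \<ge> 1 \<Longrightarrow> \<bar>b k n\<bar> \<le> 2 powr ((log 2 (A n)) powr \<kappa>)"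
    and limsup: "limsup (\<lambda>n. ereal (real_of_int (A n) powr (1 / real (K * d + 1) ^ n))) = \<infinity>"
    and ev: "\<forall>\<^sub>F N in sequentially. mpoly_eval K d c (\<lambda>k. partial_alpha a b k N) \<noteq> 0"
  shows "mpoly_eval K d c (\<lambda>k. lim (partial_alpha a b k)) \<noteq> 0"
proof
  assume root: "mpoly_eval K d c (\<lambda>k. lim (partial_alpha a b k)) = 0"
  define m where "m = real (K * d + 1)"
  define u where "u n = log 2 (real_of_int (A n))" for n
  have "1 \<le> K * d" using \<open>d > 0\<close> \<open>K > 0\<close> by simp
  then have "2 \<le> m" unfolding m_def by linarith
  have A_real: "\<And>n. 1 \<le> n \<Longrightarrow>
      real n powr (1 + \<epsilon>) \<le> real_of_int (A n) \<and> real_of_int (A n) \<le> real_of_int (A (n + 1))"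
    using A_low by simp
  have A_ge: "\<And>n. 1 \<le> n \<Longrightarrow> 1 \<le> real_of_int (A n)"
    and u_mono: "\<And>n j. 1 \<le> n \<Longrightarrow> n \<le> j \<Longrightarrow> u n \<le> u j"
    and u_lower: "\<And>n. 1 \<le> n \<Longrightarrow> (1 + \<epsilon>) * log 2 n \<le> u n"
    using polynomially_growing[of \<epsilon> "\<lambda>n. real_of_int (A n)", folded u_def] \<open>\<epsilon> > 0\<close> A_real
    by blast+
  have u_nonneg: "0 \<le> u n" if "1 \<le> n" for n unfolding u_def using A_ge[OF that] by simp
  obtain \<theta> c' N\<^sub>0 where "0 < \<theta>" "0 \<le> c'" "1 \<le> N\<^sub>0" and witness: "\<And>N. N\<^sub>0 \<le> N \<Longrightarrow> \<exists>j>N.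
      u j - 2 * u j powr \<kappa> \<le> (m - 1) * growth_sum m \<kappa> u N + c' + real (j - N) \<and>
      \<theta> * u j - 2 * u j powr \<kappa> \<le> (m - 1) * growth_sum m \<kappa> u N + c'"
  proof (rule growth_witnesses_of_root[OF \<open>K > 0\<close> \<open>\<epsilon> > 0\<close> m_def _ _ root ev _ _ u_lower])
    show "partial_alpha a b k \<longlonglongrightarrow> lim (partial_alpha a b k)" if "k \<in> {1..K}" for k
      using conv[OF that] by (simp add: convergent_LIMSEQ_iff)
    show "\<bar>real_of_int (a k n)\<bar> \<le> 2 powr (u n + u n powr \<kappa> + real n powr (-3) * m ^ n)"
      if "k \<in> {1..K}" "1 \<le> n" for k n
      unfolding u_def m_def using a_up[OF that] A_ge[OF that(2)] by (intro abs_le_powr_of_le_max) auto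
    show "\<bar>real_of_int (b k n) / real_of_int (a k n)\<bar> \<le> 2 powr (- (u n - 2 * u n powr \<kappa>))"
      if "k \<in> {1..K}" "1 \<le> n" for k n
      unfolding u_def using a_low[OF that] b_up[OF that] A_ge[OF that(2)] by (intro abs_quotient_le_powr) auto
  qed (use nz in auto)
  obtain B where "\<And>n. 1 \<le> n \<Longrightarrow> u n \<le> B * m ^ n"
    using exponential_bound_from_witnesses[of m \<kappa> u \<theta> c' N\<^sub>0] \<open>2 \<le> m\<close> \<open>\<kappa> > 0\<close> \<open>\<kappa> < 1\<close>
      u_nonneg u_mono \<open>0 < \<theta>\<close> \<open>0 \<le> c'\<close> \<open>1 \<le> N\<^sub>0\<close> witness by auto
  then have "limsup (\<lambda>n. ereal (real_of_int (A n) powr (1 / m ^ n))) \<le> ereal (2 powr B)"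
    using \<open>2 \<le> m\<close> order.strict_trans2[OF zero_less_one A_ge] unfolding u_def
    by (intro limsup_root_le_of_log_le) auto
  then show False using limsup unfolding m_def by simp
qed

end
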